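(* Let $(a_i)_{i\ge1},(b_i)_{i\ge1}$ be positive reals, let $V_i\sim\mathrm{Beta}(a_i,b_i)$ be independent, and let $\Pi$ be the law of $\mathbf p=(p_i)_{i\ge1}$ with $p_1=V_1$, $p_i=V_i\prod_{l<i}(1-V_l)$. Then for every $\epsilon>0$ and every $\mathbf p^*\in\mathcal S$, $$\Pi\big(\mathbf p:\ \|\mathbf p^*-\mathbf p\|_1<\epsilon\big)>0,$$ where $\|\mathbf p^*-\mathbf p\|_1=\sum_{i\ge1}|p^*_i-p_i|$.
   Context: $\mathcal S=\{\mathbf p=(p_i)_{i\ge1}:\ \sum_{i\ge1}p_i=1,\ p_i>0\ \forall i\ge1\}$ is the infinite-dimensional open simplex. *)

theory Defs
  imports "HOL-Probability.Probability"
begin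

definition beta_density :: "real \<Rightarrow> real \<Rightarrow> real \<Rightarrow> real" where
  "beta_density a b x =
     (if 0 < x \<and> x < 1 then x powr (a - 1) * (1 - x) powr (b - 1) / Beta a b else 0)"

text \<open>Infinite-dimensional open simplex (indices shifted to start at 0).\<close>
definition open_simplex :: "(nat \<Rightarrow> real) set" where
  "open_simplex = {p. (\<forall>i. 0 < p i) \<and> p sums 1}"

definition stick_breaking :: "(nat \<Rightarrow> real) \<Rightarrow> nat \<Rightarrow> real" where
  "stick_breaking v i = v i * (\<Prod>l<i. 1 - v l)"

end

theory Submission
  imports Defs
begin

text \<open>
  The fractions \<open>c i = p\<^sup>* i / (1 - (\<Sum>l<i. p\<^sup>* l))\<close> break the stick exactly into \<open>p\<^sup>*\<close>.
  Since the prefix products \<open>\<Prod>l<n. 1 - v l\<close> are 1-Lipschitz in \<open>\<ell>\<^sup>1\<close>, for \<open>v \<in> [0,1]\<^sup>\<nat>\<close> the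
  \<open>\<ell>\<^sup>1\<close>-distance between the stick-breaking weights of \<open>v\<close> and \<open>c\<close> is at most
  \<open>(N + 1) * (\<Sum>l<N. \<bar>v l - c l\<bar>)\<close> plus twice the mass \<open>1 - (\<Sum>l<N. p\<^sup>* l)\<close> left after \<open>N\<close> steps.
  Choosing \<open>N\<close> so that this mass is small and then the first \<open>N\<close> of the \<open>V\<^sub>i\<close> close to \<open>c\<close> forces the
  distance below \<open>\<epsilon>\<close>; that event has positive probability because the Beta densities are
  positive on \<open>(0,1)\<close> and the \<open>V\<^sub>i\<close> are independent.
\<close>

lemma abs_prod_one_minus_diff_le:
  fixes v c :: "nat \<Rightarrow> real"
  assumes "\<And>l. l < n \<Longrightarrow> v l \<in> {0..1}" and "\<And>l. l < n \<Longrightarrow> c l \<in> {0..1}"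
  shows "\<bar>(\<Prod>l<n. 1 - v l) - (\<Prod>l<n. 1 - c l)\<bar> \<le> (\<Sum>l<n. \<bar>v l - c l\<bar>)"
  using assms
proof (induction n)
  case 0
  then show ?case by simp
next
  case (Suc n)
  define A where "A = (\<Prod>l<n. 1 - v l)"
  define B where "B = (\<Prod>l<n. 1 - c l)"
  have B: "0 \<le> B" "B \<le> 1"
    unfolding B_def using Suc.prems by (auto intro!: prod_nonneg prod_le_1)
  have IH: "\<bar>A - B\<bar> \<le> (\<Sum>l<n. \<bar>v l - c l\<bar>)"
    unfolding A_def B_def using Suc by auto
  have vn: "0 \<le> 1 - v n" "1 - v n \<le> 1" using Suc.prems(1)[of n] by auto
  have "A * (1 - v n) - B * (1 - c n) = (A - B) * (1 - v n) + B * (c n - v n)"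
    by (simp add: algebra_simps)
  also have "\<bar>\<dots>\<bar> \<le> \<bar>A - B\<bar> * (1 - v n) + B * \<bar>c n - v n\<bar>"
    using vn B by (metis abs_mult abs_of_nonneg abs_triangle_ineq)
  also have "\<dots> \<le> \<bar>A - B\<bar> + \<bar>v n - c n\<bar>"
    using vn B by (intro add_mono) (simp_all add: abs_minus_commute mult_left_le mult_left_le_one_le)
  finally show ?case using IH by (simp add: A_def B_def)
qed

lemma sum_stick_breaking: "(\<Sum>i<n. stick_breaking v i) = 1 - (\<Prod>l<n. 1 - v l)"
  by (induction n) (simp_all add: stick_breaking_def algebra_simps)

lemma stick_breaking_nonneg:
  assumes "\<And>l. v l \<in> {0..1}"
  shows "0 \<le> stick_breaking v i"
  using assms unfolding stick_breaking_def by (auto intro!: mult_nonneg_nonneg prod_nonneg)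

lemma abs_stick_breaking_diff_le:
  fixes v c :: "nat \<Rightarrow> real"
  assumes "\<And>l. v l \<in> {0..1}" and "\<And>l. c l \<in> {0..1}"
  shows "\<bar>stick_breaking c i - stick_breaking v i\<bar> \<le> (\<Sum>l\<le>i. \<bar>v l - c l\<bar>)"
proof -
  define A where "A = (\<Prod>l<i. 1 - v l)"
  define B where "B = (\<Prod>l<i. 1 - c l)"
  have B: "0 \<le> B" "B \<le> 1"
    unfolding B_def using assms(2) by (auto intro!: prod_nonneg prod_le_1)
  have AB: "\<bar>A - B\<bar> \<le> (\<Sum>l<i. \<bar>v l - c l\<bar>)"
    unfolding A_def B_def using assms by (intro abs_prod_one_minus_diff_le)
  have "c i * B - v i * A = (c i - v i) * B + v i * (B - A)"
    by (simp add: algebra_simps)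
  also have "\<bar>\<dots>\<bar> \<le> \<bar>c i - v i\<bar> * B + v i * \<bar>B - A\<bar>"
    using assms(1)[of i] B by (metis abs_mult abs_of_nonneg abs_triangle_ineq atLeastAtMost_iff)
  also have "\<dots> \<le> \<bar>v i - c i\<bar> + \<bar>A - B\<bar>"
    using assms(1)[of i] B
    by (intro add_mono) (simp_all add: abs_minus_commute mult_right_le_one_le mult_left_le_one_le)
  finally show ?thesis
    using AB by (simp add: stick_breaking_def A_def B_def lessThan_Suc_atMost[symmetric])
qed

lemma sum_stick_breaking_tail_le:
  assumes "\<And>l. v l \<in> {0..1}"
  shows "(\<Sum>i\<in>{N..<m}. stick_breaking v i) \<le> (\<Prod>l<N. 1 - v l)"
proof (cases "N \<le> m")
  case True
  have "(\<Sum>i\<in>{N..<m}. stick_breaking v i) = (\<Prod>l<N. 1 - v l) - (\<Prod>l<m. 1 - v l)"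
    using sum_diff_nat_ivl[of 0 N m "stick_breaking v"] True
    by (simp add: sum_stick_breaking atLeast0LessThan)
  moreover have "0 \<le> (\<Prod>l<m. 1 - v l)"
    using assms by (auto intro!: prod_nonneg)
  ultimately show ?thesis by linarith
next
  case False
  then show ?thesis using assms by (auto intro!: prod_nonneg)
qed

lemma suminf_abs_stick_breaking_diff_le:
  fixes v c :: "nat \<Rightarrow> real"
  assumes v: "\<And>l. v l \<in> {0..1}" and c: "\<And>l. c l \<in> {0..1}"
  shows "(\<Sum>i. \<bar>stick_breaking c i - stick_breaking v i\<bar>)
           \<le> (real N + 1) * (\<Sum>l<N. \<bar>v l - c l\<bar>) + 2 * (\<Prod>l<N. 1 - c l)"
    (is "suminf ?f \<le> (real N + 1) * ?D + 2 * ?P")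
proof -
  have head: "(\<Sum>i<N. ?f i) \<le> real N * ?D"
  proof -
    have "?f i \<le> ?D" if "i < N" for i
    proof -
      have "?f i \<le> (\<Sum>l\<le>i. \<bar>v l - c l\<bar>)"
        using v c by (rule abs_stick_breaking_diff_le)
      also have "\<dots> \<le> ?D"
        using that by (intro sum_mono2) auto
      finally show ?thesis .
    qed
    then show ?thesis
      using sum_bounded_above[of "{..<N}" ?f ?D] by simp
  qed
  have tail: "(\<Sum>i\<in>{N..<m}. ?f i) \<le> 2 * ?P + ?D" for m
  proof -
    have "(\<Sum>i\<in>{N..<m}. ?f i)
            \<le> (\<Sum>i\<in>{N..<m}. stick_breaking c i) + (\<Sum>i\<in>{N..<m}. stick_breaking v i)"
      unfolding sum.distrib[symmetric]
    proof (rule sum_mono)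
      fix i
      show "?f i \<le> stick_breaking c i + stick_breaking v i"
        using stick_breaking_nonneg[of v i, OF v] stick_breaking_nonneg[of c i, OF c] by linarith
    qed
    also have "\<dots> \<le> ?P + (\<Prod>l<N. 1 - v l)"
      using v c by (intro add_mono sum_stick_breaking_tail_le)
    also have "\<dots> \<le> ?P + (?P + ?D)"
      using abs_prod_one_minus_diff_le[of N v c] v c by (simp add: abs_le_iff)
    finally show ?thesis by simp
  qed
  have partial: "(\<Sum>i<n. ?f i) \<le> (real N + 1) * ?D + 2 * ?P" for n
  proof -
    have "(\<Sum>i<n. ?f i) \<le> (\<Sum>i<max n N. ?f i)"
      by (intro sum_mono2) auto
    also have "\<dots> = (\<Sum>i<N. ?f i) + (\<Sum>i\<in>{N..<max n N}. ?f i)"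
      using sum.atLeastLessThan_concat[of 0 N "max n N" ?f] by (simp add: atLeast0LessThan)
    also have "\<dots> \<le> real N * ?D + (2 * ?P + ?D)"
      using head tail by (rule add_mono)
    finally show ?thesis by (simp add: algebra_simps)
  qed
  have "summable ?f"
  proof (rule bounded_imp_summable)
    show "(\<Sum>i\<le>n. ?f i) \<le> (real N + 1) * ?D + 2 * ?P" for n
      using partial[of "Suc n"] by (simp add: lessThan_Suc_atMost)
  qed simp
  then show ?thesis
    using partial by (rule suminf_le_const)
qed

definition stick_fraction :: "(nat \<Rightarrow> real) \<Rightarrow> nat \<Rightarrow> real" where
  "stick_fraction p i = p i / (1 - (\<Sum>l<i. p l))"

lemma open_simplex_remainder_pos:
  assumes "p \<in> open_simplex"
  shows "0 < 1 - (\<Sum>l<n. p l)"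
proof -
  have "p sums 1" and "\<And>i. 0 < p i"
    using assms by (auto simp: open_simplex_def)
  then have "(\<Sum>l<n. p l) < 1"
    using sum_less_suminf[of p n] by (auto simp: sums_iff)
  then show ?thesis by simp
qed

lemma prod_one_minus_stick_fraction:
  assumes "p \<in> open_simplex"
  shows "(\<Prod>l<n. 1 - stick_fraction p l) = 1 - (\<Sum>l<n. p l)"
proof (induction n)
  case 0
  then show ?case by simp
next
  case (Suc n)
  have "0 < 1 - (\<Sum>l<n. p l)"
    using assms by (rule open_simplex_remainder_pos)
  then have "(1 - (\<Sum>l<n. p l)) * (1 - stick_fraction p n) = 1 - (\<Sum>l<Suc n. p l)"
    by (simp add: stick_fraction_def field_simps)
  then show ?case
    by (simp add: Suc.IH)
qed

lemma stick_breaking_stick_fraction: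
  assumes "p \<in> open_simplex"
  shows "stick_breaking (stick_fraction p) = p"
proof
  fix i
  show "stick_breaking (stick_fraction p) i = p i"
    using open_simplex_remainder_pos[OF assms, of i]
    unfolding stick_breaking_def prod_one_minus_stick_fraction[OF assms]
    by (simp add: stick_fraction_def)
qed

lemma stick_fraction_bounds:
  assumes "p \<in> open_simplex"
  shows "0 < stick_fraction p i" and "stick_fraction p i < 1"
proof -
  have "0 < p i" using assms by (simp add: open_simplex_def)
  moreover have "0 < 1 - (\<Sum>l<Suc i. p l)"
    using assms by (rule open_simplex_remainder_pos)
  ultimately show "0 < stick_fraction p i" and "stick_fraction p i < 1"
    by (simp_all add: stick_fraction_def field_simps)
qed

lemma stick_breaking_l1_neighbourhood:
  assumes p: "p \<in> open_simplex" and "0 < \<epsilon>"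
  obtains \<delta> N where "0 < \<delta>"
    and "\<And>v. (\<And>i. v i \<in> {0..1}) \<Longrightarrow> (\<And>i. i < N \<Longrightarrow> \<bar>v i - stick_fraction p i\<bar> < \<delta>) \<Longrightarrow>
           (\<Sum>i. \<bar>p i - stick_breaking v i\<bar>) < \<epsilon>"
proof -
  define c where "c = stick_fraction p"
  have c: "c l \<in> {0..1}" for l
    using stick_fraction_bounds[OF p, of l] by (simp add: c_def)
  have "(\<lambda>n. \<Sum>l<n. p l) \<longlonglongrightarrow> 1"
    using p by (simp add: open_simplex_def sums_def)
  then have "(\<lambda>n. 1 - (\<Sum>l<n. p l)) \<longlonglongrightarrow> 0"
    using tendsto_diff[OF tendsto_const[of 1]] by fastforce
  then have "eventually (\<lambda>n. 1 - (\<Sum>l<n. p l) < \<epsilon> / 4) sequentially"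
    using \<open>0 < \<epsilon>\<close> by (intro order_tendstoD(2)) auto
  then obtain N where N: "1 - (\<Sum>l<N. p l) < \<epsilon> / 4"
    by (auto simp: eventually_sequentially)
  define \<delta> where "\<delta> = \<epsilon> / (2 * (real N + 1)\<^sup>2)"
  have "0 < \<delta>" using \<open>0 < \<epsilon>\<close> by (simp add: \<delta>_def)
  moreover have "(\<Sum>i. \<bar>p i - stick_breaking v i\<bar>) < \<epsilon>"
    if v: "\<And>i. v i \<in> {0..1}" and close: "\<And>i. i < N \<Longrightarrow> \<bar>v i - c i\<bar> < \<delta>" for v
  proof -
    have "(\<Sum>l<N. \<bar>v l - c l\<bar>) \<le> real N * \<delta>"
      using sum_bounded_above[of "{..<N}" "\<lambda>l. \<bar>v l - c l\<bar>" \<delta>] close by fastforce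
    then have "(real N + 1) * (\<Sum>l<N. \<bar>v l - c l\<bar>) \<le> (real N + 1)\<^sup>2 * \<delta>"
      using \<open>0 < \<delta>\<close> by (auto simp: power2_eq_square intro: order.trans mult_left_mono)
    also have "\<dots> = \<epsilon> / 2"
      by (simp add: \<delta>_def)
    finally have "(real N + 1) * (\<Sum>l<N. \<bar>v l - c l\<bar>) + 2 * (\<Prod>l<N. 1 - c l) < \<epsilon>"
      using N prod_one_minus_stick_fraction[OF p, of N] by (simp add: c_def)
    moreover have "(\<Sum>i. \<bar>p i - stick_breaking v i\<bar>)
                     \<le> (real N + 1) * (\<Sum>l<N. \<bar>v l - c l\<bar>) + 2 * (\<Prod>l<N. 1 - c l)"
      using suminf_abs_stick_breaking_diff_le[of v c N, OF v c]
      by (simp add: c_def stick_breaking_stick_fraction[OF p])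
    ultimately show ?thesis by linarith
  qed
  ultimately show ?thesis
    using that unfolding c_def by blast
qed

lemma beta_density_pos:
  assumes "0 < a" "0 < b" "0 < x" "x < 1"
  shows "0 < beta_density a b x"
proof -
  have "0 < Beta a b" using assms by (simp add: Beta_def)
  then show ?thesis using assms by (simp add: beta_density_def)
qed

lemma (in prob_space) beta_distributed_AE_unit_interval:
  assumes "distributed M lborel X (\<lambda>x. ennreal (beta_density a b x))"
  shows "AE \<omega> in M. X \<omega> \<in> {0..1}"
proof -
  have distr_X: "distr M lborel X = density lborel (\<lambda>x. ennreal (beta_density a b x))"
    and [measurable]: "(\<lambda>x. ennreal (beta_density a b x)) \<in> borel_measurable lborel"
    using assms by (auto simp: distributed_def)
  have "AE x in distr M lborel X. x \<in> {0..1}"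
    unfolding distr_X by (subst AE_density) (auto intro!: AE_I2 simp: beta_density_def)
  then show ?thesis
    using assms by (intro AE_distrD[of X M lborel]) (auto simp: distributed_def)
qed

lemma (in prob_space) beta_distributed_interval_prob_pos:
  assumes X: "distributed M lborel X (\<lambda>x. ennreal (beta_density a b x))"
    and "0 < a" "0 < b" and J: "max 0 s < min 1 t"
  shows "0 < prob (X -` {s<..<t} \<inter> space M)"
proof (rule ccontr)
  have [measurable]: "X \<in> borel_measurable M"
    and [measurable]: "(\<lambda>x. ennreal (beta_density a b x)) \<in> borel_measurable lborel"
    and distr_X: "distr M lborel X = density lborel (\<lambda>x. ennreal (beta_density a b x))"
    using X by (auto simp: distributed_def)
  assume "\<not> 0 < prob (X -` {s<..<t} \<inter> space M)"
  then have "emeasure M (X -` {s<..<t} \<inter> space M) = 0"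
    using measure_nonneg[of M "X -` {s<..<t} \<inter> space M"] by (simp add: emeasure_eq_measure)
  then have "emeasure (distr M lborel X) {s<..<t} = 0"
    by (simp add: emeasure_distr)
  then have "AE x in lborel. ennreal (beta_density a b x) * indicator {s<..<t} x = 0"
    by (simp add: distr_X emeasure_density nn_integral_0_iff_AE)
  then have "AE x in lborel. x \<notin> {max 0 s<..<min 1 t}"
    by eventually_elim (use \<open>0 < a\<close> \<open>0 < b\<close> beta_density_pos in fastforce)
  then have "{max 0 s<..<min 1 t} \<in> null_sets lborel"
    by (subst AE_iff_null_sets) auto
  then show False
    using J by (simp add: null_sets_def min_def max_def split: if_splits)
qed

lemma (in prob_space) indep_vars_prob_Inter_pos:
  assumes "indep_vars M' X I" and "J \<subseteq> I" "finite J" "J \<noteq> {}"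
    and "\<And>j. j \<in> J \<Longrightarrow> B j \<in> sets (M' j)"
    and "\<And>j. j \<in> J \<Longrightarrow> 0 < prob (X j -` B j \<inter> space M)"
  shows "0 < prob (\<Inter>j\<in>J. X j -` B j \<inter> space M)"
proof -
  have "prob (\<Inter>j\<in>J. X j -` B j \<inter> space M) = (\<Prod>j\<in>J. prob (X j -` B j \<inter> space M))"
    using assms(1-5) unfolding indep_vars_def2 by (intro indep_setsD) auto
  then show ?thesis
    using assms(6) by (simp add: prod_pos)
qed

theorem propositionS2:
  fixes M :: "'w measure" and V :: "nat \<Rightarrow> 'w \<Rightarrow> real"
    and a b :: "nat \<Rightarrow> real" and pstar :: "nat \<Rightarrow> real" and \<epsilon> :: real
  assumes "prob_space M"
    and "\<And>i. 0 < a i" and "\<And>i. 0 < b i"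
    and "prob_space.indep_vars M (\<lambda>_. borel) V UNIV"
    and "\<And>i. distributed M lborel (V i) (\<lambda>x. ennreal (beta_density (a i) (b i) x))"
    and "pstar \<in> open_simplex"
    and "0 < \<epsilon>"
  shows "measure M {\<omega> \<in> space M.
           (\<Sum>i. \<bar>pstar i - stick_breaking (\<lambda>l. V l \<omega>) i\<bar>) < \<epsilon>} > 0"
proof -
  interpret prob_space M by fact
  have [measurable]: "V i \<in> borel_measurable M" for i
    using assms(5) by (simp add: distributed_def)
  obtain \<delta> N where "0 < \<delta>" and close:
    "\<And>v. (\<And>i. v i \<in> {0..1}) \<Longrightarrow> (\<And>i. i < N \<Longrightarrow> \<bar>v i - stick_fraction pstar i\<bar> < \<delta>) \<Longrightarrow>
       (\<Sum>i. \<bar>pstar i - stick_breaking v i\<bar>) < \<epsilon>"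
    using stick_breaking_l1_neighbourhood[OF assms(6,7)] by metis
  define I where "I i = {stick_fraction pstar i - \<delta> <..< stick_fraction pstar i + \<delta>}" for i
  define box where "box = (\<Inter>i\<le>N. V i -` I i \<inter> space M)"
  define T where "T = {\<omega> \<in> space M. (\<Sum>i. \<bar>pstar i - stick_breaking (\<lambda>l. V l \<omega>) i\<bar>) < \<epsilon>}"
  have "0 < prob (V i -` I i \<inter> space M)" for i
    unfolding I_def using assms(2,3) stick_fraction_bounds[OF assms(6), of i] \<open>0 < \<delta>\<close>
    by (intro beta_distributed_interval_prob_pos[OF assms(5)]) auto
  then have "0 < prob box"
    unfolding box_def using assms(4) by (intro indep_vars_prob_Inter_pos) (auto simp: I_def)
  also have "prob box \<le> prob T"
  proof (rule finite_measure_mono_AE)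
    have "AE \<omega> in M. \<forall>i. V i \<omega> \<in> {0..1}"
      using beta_distributed_AE_unit_interval[OF assms(5)] by (simp add: AE_all_countable)
    then show "AE \<omega> in M. \<omega> \<in> box \<longrightarrow> \<omega> \<in> T"
      by eventually_elim (auto simp: box_def I_def T_def abs_diff_less_iff intro!: close)
    show "T \<in> sets M"
      unfolding T_def stick_breaking_def by measurable
  qed
  finally show ?thesis
    by (simp add: T_def)
qed

end
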